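(* Suppose $n\in\mathbb N$ with $n\equiv1\pmod 4$. Then \[ \sum_{d\mid n}\left(\frac{-1}{d}\right)d^2+6\sum_{d\mid\frac n3}\left(\frac{-1}{d}\right)d^2>0 . \] Moreover, let $A(n)$ denote the $n$-th Fourier coefficient of \[ \mathcal E(z):=\sum_{\substack{n\ge1\\ n\equiv1\ (12)}}\sum_{d\mid n}\left(\tfrac{-1}{d}\right)d^2q^n-\frac12\sum_{\substack{n\ge1\\ n\equiv5\ (12)}}\sum_{d\mid n}\left(\tfrac{-1}{d}\right)d^2q^n-2\sum_{\substack{n\ge1\\ n\equiv 9\ (12)}}\Big(\sum_{d\mid n}\left(\tfrac{-1}{d}\right)d^2+6\sum_{d\mid \frac n3}\left(\tfrac{-1}{d}\right)d^2\Big)q^n . \] Then for every $n\in\mathbb N_0$, \[ \operatorname{sgn}(A(4n+1))=\begin{cases}1&\text{if } 3\mid n,\\ -1&\text{otherwise.}\end{cases} \]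
   Context: Sums are over positive divisors; a sum over $d\mid \frac n3$ is empty (zero) if $3\nmid n$. $\left(\frac{-1}{d}\right)$ is the Kronecker symbol. *)

theory Defs
  imports "HOL-Computational_Algebra.Computational_Algebra"
begin

text \<open>Kronecker symbol (-1/d) for d > 0: completely multiplicative in d with
  (-1/2) = 1 and (-1/p) = (-1)^((p-1)/2) for odd primes p. Hence it equals
  the value on the odd part of d, which is 1 if the odd part is 1 mod 4, and -1 otherwise.
  For d = 0 the Kronecker symbol (-1/0) is 1 (since |-1| = 1).\<close>
definition kron_m1 :: "nat \<Rightarrow> int" where
  "kron_m1 d = (if d = 0 then 1 else
     (let m = d div 2 ^ multiplicity 2 d in if m mod 4 = 1 then 1 else -1))"

definition sig :: "nat \<Rightarrow> int" where
  "sig n = (\<Sum>d | d dvd n \<and> d > 0. kron_m1 d * int d ^ 2)"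

definition sig3 :: "nat \<Rightarrow> int" where
  "sig3 n = (if 3 dvd n then sig (n div 3) else 0)"

definition coeffA :: "nat \<Rightarrow> real" where
  "coeffA n = (if n \<ge> 1 \<and> n mod 12 = 1 then of_int (sig n)
     else if n \<ge> 1 \<and> n mod 12 = 5 then - (1/2) * of_int (sig n)
     else if n \<ge> 1 \<and> n mod 12 = 9 then - 2 * of_int (sig n + 6 * sig3 n)
     else 0)"

end

theory Submission
  imports Defs
begin

text \<open>For odd \<open>k\<close> every proper divisor of \<open>k\<close> is \<open>k / e\<close> with \<open>e \<ge> 3\<close>, so the squares of
  the proper divisors sum to less than \<open>k\<^sup>2 \<Sum>\<^sub>e\<^sub>\<ge>\<^sub>3 1/(e(e-1)) = k\<^sup>2/2\<close>; hence \<open>sig k\<close> has the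
  sign of its leading term \<open>(-1/k) k\<^sup>2\<close>. If \<open>n = 3k\<close>, then \<open>sig n = -9 sig k + T\<close>, where \<open>T\<close>
  is the part of \<open>sig k\<close> over the divisors prime to 3, so \<open>sig n + 6 sig (n/3) = T - 3 sig k\<close>.
  This is \<open>-2 sig k\<close> if 3 does not divide \<open>k\<close>; otherwise \<open>T\<close> runs over proper divisors of \<open>k\<close>
  only, and \<open>|T| < k\<^sup>2/2 < -3 sig k\<close>.\<close>

definition proper_divisors :: "nat \<Rightarrow> nat set" where
  "proper_divisors k = {d. d dvd k \<and> 0 < d \<and> d < k}"

lemma finite_proper_divisors [simp]: "finite (proper_divisors k)"
  unfolding proper_divisors_def by (rule finite_subset[of _ "{..k}"]) auto

lemma divisors_eq_insert_proper_divisors: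
  "0 < k \<Longrightarrow> {d. d dvd k \<and> 0 < d} = insert k (proper_divisors k)"
  unfolding proper_divisors_def by (auto simp: dvd_imp_le le_neq_implies_less)

lemma inverse_square_le_telescope_term:
  fixes e :: real
  assumes "1 < e"
  shows "1 / e\<^sup>2 \<le> 1 / (e - 1) - 1 / e"
proof -
  have "1 / (e - 1) - 1 / e = 1 / (e * (e - 1))"
    using assms by (simp add: field_simps)
  moreover have "1 / e\<^sup>2 \<le> 1 / (e * (e - 1))"
    using assms by (intro divide_left_mono) (auto simp: power2_eq_square)
  ultimately show ?thesis by simp
qed

lemma sum_telescope_from_3:
  "2 \<le> k \<Longrightarrow> (\<Sum>e=3..k. 1 / (real e - 1) - 1 / real e) = 1 / 2 - 1 / real k"
  using sum_telescope''[of 2 k "\<lambda>e. - 1 / real e"] by (simp add: numeral_3_eq_3 of_nat_diff)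

lemma sum_proper_divisors_square_lt:
  assumes "odd k"
  shows "2 * (\<Sum>d\<in>proper_divisors k. int d ^ 2) < int k ^ 2"
proof -
  have "0 < k" using assms by (cases k) auto
  let ?t = "\<lambda>e. real k ^ 2 * (1 / (real e - 1) - 1 / real e)"
  have "(\<Sum>d\<in>proper_divisors k. real d ^ 2) \<le> (\<Sum>e=3..k. ?t e)"
  proof (rule sum_le_included[where i = "\<lambda>e. k div e"])
    show "\<forall>e\<in>{3..k}. 0 \<le> ?t e" by (auto simp: field_simps)
    show "\<forall>d\<in>proper_divisors k. \<exists>e\<in>{3..k}. k div e = d \<and> real d ^ 2 \<le> ?t e"
    proof
      fix d assume "d \<in> proper_divisors k"
      then have d: "d dvd k" "0 < d" "d < k" by (auto simp: proper_divisors_def)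
      define e where "e = k div d"
      have k_eq: "k = d * e" using d(1) by (simp add: e_def)
      then have "odd e" "e \<noteq> 1" "e \<le> k" using assms d \<open>0 < k\<close> by auto
      then have "3 \<le> e" by presburger
      have "real d ^ 2 = real k ^ 2 * (1 / real e ^ 2)"
        using \<open>3 \<le> e\<close> by (simp add: k_eq field_simps)
      also have "\<dots> \<le> ?t e"
        using \<open>3 \<le> e\<close> by (intro mult_left_mono inverse_square_le_telescope_term) auto
      finally show "\<exists>e\<in>{3..k}. k div e = d \<and> real d ^ 2 \<le> ?t e"
        using \<open>3 \<le> e\<close> \<open>e \<le> k\<close> d by (intro bexI[of _ e]) (auto simp: e_def)
    qed
  qed auto
  also have "\<dots> < real k ^ 2 / 2"
  proof (cases "2 \<le> k")
    case True
    then have "(\<Sum>e=3..k. ?t e) = real k ^ 2 * (1 / 2 - 1 / real k)"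
      by (simp add: sum_distrib_left[symmetric] sum_telescope_from_3)
    also have "\<dots> < real k ^ 2 / 2"
      using \<open>0 < k\<close> by (simp add: field_simps power2_eq_square)
    finally show ?thesis .
  next
    case False
    with \<open>0 < k\<close> show ?thesis by simp
  qed
  finally have "real_of_int (2 * (\<Sum>d\<in>proper_divisors k. int d ^ 2)) < real_of_int (int k ^ 2)"
    by simp
  then show ?thesis by linarith
qed

lemma kron_m1_odd: "odd d \<Longrightarrow> kron_m1 d = (if d mod 4 = 1 then 1 else -1)"
  unfolding kron_m1_def by (cases d) (auto simp: not_dvd_imp_multiplicity_0 Let_def)

lemma abs_kron_m1 [simp]: "\<bar>kron_m1 d\<bar> = 1"
  unfolding kron_m1_def by (auto simp: Let_def)

lemma kron_m1_triple: "odd e \<Longrightarrow> kron_m1 (3 * e) = - kron_m1 e"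
  by (simp add: kron_m1_odd) presburger

lemma abs_sum_kron_m1_square_le: "\<bar>\<Sum>d\<in>A. kron_m1 d * int d ^ 2\<bar> \<le> (\<Sum>d\<in>A. int d ^ 2)"
  using sum_abs[of "\<lambda>d. kron_m1 d * int d ^ 2" A] by (simp add: abs_mult)

lemma sig_eq_leading_term_plus_proper:
  "0 < k \<Longrightarrow> sig k = kron_m1 k * int k ^ 2 + (\<Sum>d\<in>proper_divisors k. kron_m1 d * int d ^ 2)"
  unfolding sig_def by (simp add: divisors_eq_insert_proper_divisors proper_divisors_def)

lemma sig_close_to_leading_term:
  assumes "odd k"
  shows "2 * \<bar>sig k - kron_m1 k * int k ^ 2\<bar> < int k ^ 2"
proof -
  have "0 < k" using assms by (cases k) auto
  then show ?thesis
    using sig_eq_leading_term_plus_proper abs_sum_kron_m1_square_le[of "proper_divisors k"]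
      sum_proper_divisors_square_lt[OF assms] by simp
qed

lemma sgn_sig_odd:
  assumes "odd k"
  shows "sgn (sig k) = kron_m1 k"
  using sig_close_to_leading_term[OF assms] kron_m1_odd[OF assms]
  by (cases "k mod 4 = 1") (auto simp: sgn_if abs_if split: if_splits)

lemma sig_triple:
  assumes "odd k"
  shows "sig (3 * k) = - 9 * sig k + (\<Sum>d | d dvd k \<and> 0 < d \<and> \<not> 3 dvd d. kron_m1 d * int d ^ 2)"
proof -
  let ?f = "\<lambda>d. kron_m1 d * int d ^ 2"
  let ?D = "{d. d dvd 3 * k \<and> 0 < d}"
  have "0 < k" using assms by (cases k) auto
  have multiples: "?D \<inter> {d. 3 dvd d} = (*) 3 ` {d. d dvd k \<and> 0 < d}"
    by auto
  have non_multiples: "?D - {d. 3 dvd d} = {d. d dvd k \<and> 0 < d \<and> \<not> 3 dvd d}"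
  proof -
    have "d dvd 3 * k \<longleftrightarrow> d dvd k" if "\<not> 3 dvd d" for d :: nat
      using that prime_imp_coprime[of "3::nat" d]
      by (auto simp: coprime_commute coprime_dvd_mult_right_iff)
    then show ?thesis by auto
  qed
  have "sum ?f ((*) 3 ` {d. d dvd k \<and> 0 < d}) = (\<Sum>d | d dvd k \<and> 0 < d. ?f (3 * d))"
    by (rule sum.reindex_cong[where l = "(*) 3"]) (auto simp: inj_on_def)
  also have "\<dots> = (\<Sum>d | d dvd k \<and> 0 < d. - 9 * ?f d)"
  proof (rule sum.cong)
    fix d assume "d \<in> {d. d dvd k \<and> 0 < d}"
    then have "odd d" using assms by (auto dest: dvd_trans)
    then show "?f (3 * d) = - 9 * ?f d" by (simp add: kron_m1_triple power_mult_distrib)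
  qed simp
  also have "\<dots> = - 9 * sig k"
    by (simp add: sig_def sum_distrib_left)
  moreover have "sig (3 * k) = sum ?f (?D \<inter> {d. 3 dvd d}) + sum ?f (?D - {d. 3 dvd d})"
    unfolding sig_def using \<open>0 < k\<close> by (intro sum.Int_Diff) simp
  ultimately show ?thesis
    unfolding multiples non_multiples by simp
qed

lemma sig_pos_if_mod_4_eq_1:
  assumes "k mod 4 = 1"
  shows "0 < sig k"
proof -
  have "odd k" using assms by presburger
  then have "sgn (sig k) = 1" using sgn_sig_odd kron_m1_odd assms by simp
  then show ?thesis by (simp add: sgn_1_pos)
qed

lemma sig_plus_6_sig3_pos:
  assumes "n mod 4 = 1"
  shows "0 < sig n + 6 * sig3 n"
proof (cases "3 dvd n")
  case False
  then show ?thesis using sig_pos_if_mod_4_eq_1[OF assms] by (simp add: sig3_def)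
next
  case True
  then obtain k where n: "n = 3 * k" by blast
  have "k mod 4 = 3" using assms unfolding n by presburger
  then have "odd k" by presburger
  with \<open>k mod 4 = 3\<close> have kron_k: "kron_m1 k = -1" by (simp add: kron_m1_odd)
  let ?T = "\<Sum>d | d dvd k \<and> 0 < d \<and> \<not> 3 dvd d. kron_m1 d * int d ^ 2"
  have sum_eq: "sig n + 6 * sig3 n = ?T - 3 * sig k"
    using sig_triple[OF \<open>odd k\<close>] by (simp add: n sig3_def)
  show ?thesis
  proof (cases "3 dvd k")
    case False
    then have "{d. d dvd k \<and> 0 < d \<and> \<not> 3 dvd d} = {d. d dvd k \<and> 0 < d}"
      using dvd_trans[of 3 _ k] by blast
    then have "?T = sig k" by (simp add: sig_def)
    then show ?thesis
      using sum_eq sgn_sig_odd[OF \<open>odd k\<close>] kron_k by (simp add: sgn_1_neg)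
  next
    case True
    have "d < k" if "d dvd k" "\<not> 3 dvd d" for d
      using that True \<open>odd k\<close> by (metis dvd_imp_le le_neq_implies_less odd_pos)
    then have "{d. d dvd k \<and> 0 < d \<and> \<not> 3 dvd d} \<subseteq> proper_divisors k"
      by (auto simp: proper_divisors_def)
    then have "\<bar>?T\<bar> \<le> (\<Sum>d\<in>proper_divisors k. int d ^ 2)"
      using abs_sum_kron_m1_square_le sum_mono2[OF finite_proper_divisors]
      by (meson order_trans zero_le_power2)
    then have "- (int k ^ 2) < 2 * ?T"
      using sum_proper_divisors_square_lt[OF \<open>odd k\<close>] by (simp add: abs_le_iff)
    moreover have "2 * sig k < - (int k ^ 2)"
      using sig_close_to_leading_term[OF \<open>odd k\<close>] kron_k by (auto simp: abs_if split: if_splits)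
    ultimately show ?thesis
      using sum_eq zero_le_power2[of "int k"] by linarith
  qed
qed

lemma sgn_coeffA_4n_plus_1: "sgn (coeffA (4 * n + 1)) = (if 3 dvd n then 1 else -1)"
proof -
  have sig_pos: "0 < sig (4 * n + 1)" by (rule sig_pos_if_mod_4_eq_1) simp
  consider "n mod 3 = 0" | "n mod 3 = 1" | "n mod 3 = 2" by linarith
  then show ?thesis
  proof cases
    case 1
    then have "(4 * n + 1) mod 12 = 1" "3 dvd n" by presburger+
    with sig_pos show ?thesis by (simp add: coeffA_def)
  next
    case 2
    then have "(4 * n + 1) mod 12 = 5" "\<not> 3 dvd n" by presburger+
    with sig_pos show ?thesis by (simp add: coeffA_def)
  next
    case 3
    then have "(4 * n + 1) mod 12 = 9" "\<not> 3 dvd n" by presburger+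
    moreover have "0 < real_of_int (sig (4 * n + 1) + 6 * sig3 (4 * n + 1))"
      using sig_plus_6_sig3_pos[of "4 * n + 1"] by simp
    ultimately show ?thesis by (simp add: coeffA_def del: of_int_add of_int_mult)
  qed
qed

theorem lemma5p2:
  shows "(\<forall>n::nat. n mod 4 = 1 \<longrightarrow> sig n + 6 * sig3 n > 0) \<and>
         (\<forall>n::nat. sgn (coeffA (4 * n + 1)) = (if 3 dvd n then 1 else -1))"
  using sig_plus_6_sig3_pos sgn_coeffA_4n_plus_1 by blast

end
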